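(* Let $G$ be a $\lambda$-graph, $B$ a bisimulation on the nodes of $G$, and $Q$ a query over $G$ with $Q\subseteq B$. Then $Q^{\Downarrow}$ is a bisimulation.
   Context: A pre-$\lambda$-graph is a directed graph whose nodes are of four kinds: an application node $@(n_1,n_2)$ has exactly two children, its left child $n_1$ and its right child $n_2$; an abstraction node $\lambda(n)$ has exactly one child, its body $n$; a free variable node has no children and carries an atom $\mathrm{id}(n)$ from a fixed set of atoms, distinct free variable nodes carrying distinct atoms; a bound variable node $\mathrm{var}(l)$ has exactly one outgoing binding edge, to an abstraction node $l$ (its binder). A trace is a finite sequence of directions from $\{\swarrow,\downarrow,\searrow\}$; $\epsilon$ is the empty trace and $d\cdot\tau$ is the trace $\tau$ extended by one final step $d$. Paths $n\xrightarrow{\tau}m$ are defined inductively: $n\xrightarrow{\epsilon}n$; if $n\xrightarrow{\tau}\lambda(m)$ then $n\xrightarrow{\downarrow\cdot\tau}m$; if $n\xrightarrow{\tau}@(m_1,m_2)$ then $n\xrightarrow{\swarrow\cdot\tau}m_1$ and $n\xrightarrow{\searrow\cdot\tau}m_2$ (binding edges are never followed). The path $n\xrightarrow{\tau}$ crosses a node $m$ if either $n\xrightarrow{\tau}m$, or $\tau=d\cdot\tau'$ and $n\xrightarrow{\tau'}$ crosses $m$. A root is a node $r$ such that the only path ending in $r$ has the empty trace. A node $m$ dominates $n$ if every path from a root to $n$ crosses $m$. A $\lambda$-graph is a pre-$\lambda$-graph that has finitely many nodes, is acyclic ($n\xrightarrow{\tau}n$ holds only for $\tau=\epsilon$), and is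 dominated (every bound variable node $\mathrm{var}(l)$ is dominated by its binder $l$). Two nodes are homogeneous if both are application nodes, or both abstraction nodes, or both free variable nodes, or both bound variable nodes; a binary relation $R$ on nodes is homogeneous if it only relates homogeneous nodes. Rules: $(\swarrow)$: $@(n_1,n_2)\,R\,@(m_1,m_2)$ implies $n_1\,R\,m_1$; $(\searrow)$: $@(n_1,n_2)\,R\,@(m_1,m_2)$ implies $n_2\,R\,m_2$; $(\downarrow)$: $\lambda(n)\,R\,\lambda(m)$ implies $n\,R\,m$; $(\circlearrowright)$: $\mathrm{var}(n)\,R\,\mathrm{var}(m)$ implies $n\,R\,m$. $R$ is propagated if closed under $(\swarrow),(\downarrow),(\searrow)$. A bisimulation is a homogeneous propagated relation closed also under $(\circlearrowright)$. $R^{\Downarrow}$ (propagation) is the smallest propagated relation containing $R$. A query over $G$ is a binary relation on the roots of $G$. *)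

theory Defs
  imports Main
begin

datatype ('n, 'a) node =
    App 'n 'n
  | Abs 'n
  | FVar 'a
  | BVar 'n        (* bound variable node with binding edge to its binder *)

type_synonym ('n, 'a) graph = "'n set \<times> ('n \<Rightarrow> ('n, 'a) node)"

definition nodes :: "('n, 'a) graph \<Rightarrow> 'n set" where
  "nodes G = fst G"

definition lab :: "('n, 'a) graph \<Rightarrow> 'n \<Rightarrow> ('n, 'a) node" where
  "lab G = snd G"

definition is_abs :: "('n, 'a) graph \<Rightarrow> 'n \<Rightarrow> bool" where
  "is_abs G l \<longleftrightarrow> (\<exists>b. lab G l = Abs b)"

definition pre_lambda_graph :: "('n, 'a) graph \<Rightarrow> bool" where
  "pre_lambda_graph G \<longleftrightarrow>
     (\<forall>n\<in>nodes G. case lab G n of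
        App n1 n2 \<Rightarrow> n1 \<in> nodes G \<and> n2 \<in> nodes G
      | Abs b \<Rightarrow> b \<in> nodes G
      | FVar _ \<Rightarrow> True
      | BVar l \<Rightarrow> l \<in> nodes G \<and> is_abs G l) \<and>
     (\<forall>n\<in>nodes G. \<forall>m\<in>nodes G. \<forall>x. lab G n = FVar x \<and> lab G m = FVar x \<longrightarrow> n = m)"

datatype dir = SW | Down | SE

text \<open>Traces are lists of directions; the head of the list is the LAST step,
so \<open>d # \<tau>\<close> is the trace \<open>\<tau>\<close> extended by a final step \<open>d\<close>.\<close>

inductive path :: "('n, 'a) graph \<Rightarrow> 'n \<Rightarrow> dir list \<Rightarrow> 'n \<Rightarrow> bool" for G where
  path_nil: "n \<in> nodes G \<Longrightarrow> path G n [] n"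
| path_down: "path G n \<tau> m \<Longrightarrow> lab G m = Abs m' \<Longrightarrow> path G n (Down # \<tau>) m'"
| path_sw: "path G n \<tau> m \<Longrightarrow> lab G m = App m1 m2 \<Longrightarrow> path G n (SW # \<tau>) m1"
| path_se: "path G n \<tau> m \<Longrightarrow> lab G m = App m1 m2 \<Longrightarrow> path G n (SE # \<tau>) m2"

inductive crosses :: "('n, 'a) graph \<Rightarrow> 'n \<Rightarrow> dir list \<Rightarrow> 'n \<Rightarrow> bool" for G where
  crosses_here: "path G n \<tau> m \<Longrightarrow> crosses G n \<tau> m"
| crosses_prefix: "crosses G n \<tau> m \<Longrightarrow> crosses G n (d # \<tau>) m"

definition is_root :: "('n, 'a) graph \<Rightarrow> 'n \<Rightarrow> bool" where
  "is_root G r \<longleftrightarrow> r \<in> nodes G \<and> (\<forall>n \<tau>. path G n \<tau> r \<longrightarrow> \<tau> = [])"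

definition dominates :: "('n, 'a) graph \<Rightarrow> 'n \<Rightarrow> 'n \<Rightarrow> bool" where
  "dominates G m n \<longleftrightarrow> (\<forall>r \<tau>. is_root G r \<longrightarrow> path G r \<tau> n \<longrightarrow> crosses G r \<tau> m)"

definition lambda_graph :: "('n, 'a) graph \<Rightarrow> bool" where
  "lambda_graph G \<longleftrightarrow> pre_lambda_graph G \<and> finite (nodes G) \<and>
     (\<forall>n \<tau>. path G n \<tau> n \<longrightarrow> \<tau> = []) \<and>
     (\<forall>n\<in>nodes G. \<forall>l. lab G n = BVar l \<longrightarrow> dominates G l n)"

definition homogeneous_nodes :: "('n, 'a) graph \<Rightarrow> 'n \<Rightarrow> 'n \<Rightarrow> bool" where
  "homogeneous_nodes G n m \<longleftrightarrow>
     (case (lab G n, lab G m) of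
        (App _ _, App _ _) \<Rightarrow> True
      | (Abs _, Abs _) \<Rightarrow> True
      | (FVar _, FVar _) \<Rightarrow> True
      | (BVar _, BVar _) \<Rightarrow> True
      | _ \<Rightarrow> False)"

definition homogeneous :: "('n, 'a) graph \<Rightarrow> 'n rel \<Rightarrow> bool" where
  "homogeneous G R \<longleftrightarrow> (\<forall>(n, m)\<in>R. homogeneous_nodes G n m)"

definition propagated :: "('n, 'a) graph \<Rightarrow> 'n rel \<Rightarrow> bool" where
  "propagated G R \<longleftrightarrow>
     (\<forall>n m n1 n2 m1 m2. (n, m) \<in> R \<longrightarrow> lab G n = App n1 n2 \<longrightarrow> lab G m = App m1 m2 \<longrightarrow>
         (n1, m1) \<in> R \<and> (n2, m2) \<in> R) \<and>
     (\<forall>n m n' m'. (n, m) \<in> R \<longrightarrow> lab G n = Abs n' \<longrightarrow> lab G m = Abs m' \<longrightarrow> (n', m') \<in> R)"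

definition bisimulation :: "('n, 'a) graph \<Rightarrow> 'n rel \<Rightarrow> bool" where
  "bisimulation G R \<longleftrightarrow> homogeneous G R \<and> propagated G R \<and>
     (\<forall>n m l l'. (n, m) \<in> R \<longrightarrow> lab G n = BVar l \<longrightarrow> lab G m = BVar l' \<longrightarrow> (l, l') \<in> R)"

inductive_set propagation :: "('n, 'a) graph \<Rightarrow> 'n rel \<Rightarrow> 'n rel" for G R where
  prop_base: "(n, m) \<in> R \<Longrightarrow> (n, m) \<in> propagation G R"
| prop_sw: "(n, m) \<in> propagation G R \<Longrightarrow> lab G n = App n1 n2 \<Longrightarrow> lab G m = App m1 m2 \<Longrightarrow>
     (n1, m1) \<in> propagation G R"
| prop_se: "(n, m) \<in> propagation G R \<Longrightarrow> lab G n = App n1 n2 \<Longrightarrow> lab G m = App m1 m2 \<Longrightarrow>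
     (n2, m2) \<in> propagation G R"
| prop_down: "(n, m) \<in> propagation G R \<Longrightarrow> lab G n = Abs n' \<Longrightarrow> lab G m = Abs m' \<Longrightarrow>
     (n', m') \<in> propagation G R"

definition is_query :: "('n, 'a) graph \<Rightarrow> 'n rel \<Rightarrow> bool" where
  "is_query G Q \<longleftrightarrow> Q \<subseteq> {r. is_root G r} \<times> {r. is_root G r}"

end

theory Submission
  imports Defs "HOL-Library.Sublist"
begin

text \<open>Since \<open>B\<close> is propagated, \<open>Q\<^sup>\<Down> \<subseteq> B\<close>, which gives homogeneity; \<open>Q\<^sup>\<Down>\<close> is
  propagated by construction. A pair \<open>(n, m) \<in> Q\<^sup>\<Down>\<close> consists of the nodes reached along one
  common trace \<open>\<tau>\<close> from a pair of roots \<open>(r, s) \<in> Q\<close>. If \<open>n\<close> and \<open>m\<close> are bound variables,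
  domination puts their binders \<open>l\<close>, \<open>l'\<close> on these two paths, at suffixes \<open>\<tau>\<^sub>1\<close>, \<open>\<tau>\<^sub>2\<close>
  of \<open>\<tau>\<close>. Nodes related by a homogeneous propagated relation have the same set of traces, and
  in a finite acyclic graph no node has the same traces as one of its proper descendants.
  If, say, \<open>\<tau>\<^sub>2 = \<rho> @ \<tau>\<^sub>1\<close>, the node \<open>x\<close> at \<open>\<tau>\<^sub>1\<close> from \<open>s\<close> is related to \<open>l\<close> by
  \<open>Q\<^sup>\<Down> \<subseteq> B\<close>, while \<open>l\<close> is related to \<open>l'\<close> by \<open>B\<close>; so \<open>x\<close> and its descendant \<open>l'\<close>
  share their traces and \<open>\<rho> = []\<close>. Hence \<open>\<tau>\<^sub>1 = \<tau>\<^sub>2\<close> and \<open>(l, l') \<in> Q\<^sup>\<Down>\<close>.\<close>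

lemma path_source: "path G r \<tau> n \<Longrightarrow> r \<in> nodes G"
  by (induction rule: path.induct) auto

lemma path_target:
  assumes "pre_lambda_graph G" "path G r \<tau> n"
  shows "n \<in> nodes G"
  using assms(2) by induction (use assms(1) in \<open>fastforce simp: pre_lambda_graph_def\<close>)+

lemma path_Nil_iff: "path G r [] n \<longleftrightarrow> r \<in> nodes G \<and> n = r"
  by (auto elim: path.cases intro: path_nil)

lemma path_append: "path G w \<rho> n \<Longrightarrow> path G r \<tau> w \<Longrightarrow> path G r (\<rho> @ \<tau>) n"
  by (induction rule: path.induct) (auto intro: path.intros)

lemma path_appendE:
  assumes "pre_lambda_graph G" "path G r (\<rho> @ \<tau>) n"
  obtains w where "path G r \<tau> w" "path G w \<rho> n"
  using assms(2)
proof (induction \<rho> arbitrary: n thesis)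
  case Nil
  then show ?case using path_target[OF assms(1)] by (metis append_Nil path_nil)
next
  case (Cons d \<rho>)
  from Cons.prems(2) obtain m where m: "path G r (\<rho> @ \<tau>) m"
    and step: "\<And>w. path G w \<rho> m \<Longrightarrow> path G w (d # \<rho>) n"
    by (cases rule: path.cases) (auto intro: path.intros)
  from Cons.IH[OF _ m] step Cons.prems(1) show ?case by blast
qed

lemma crosses_imp_suffix_path: "crosses G r \<tau> m \<Longrightarrow> \<exists>\<tau>'. suffix \<tau>' \<tau> \<and> path G r \<tau>' m"
  by (induction rule: crosses.induct) (auto intro: suffix_ConsI)

lemma homogeneous_nodes_sym: "homogeneous_nodes G n m \<Longrightarrow> homogeneous_nodes G m n"
  by (auto simp: homogeneous_nodes_def split: node.splits)

lemma homogeneous_converse: "homogeneous G R \<Longrightarrow> homogeneous G (R\<inverse>)"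
  by (auto simp: homogeneous_def intro: homogeneous_nodes_sym)

lemma propagated_converse: "propagated G R \<Longrightarrow> propagated G (R\<inverse>)"
  unfolding propagated_def by blast

lemma homogeneous_subset: "homogeneous G R \<Longrightarrow> S \<subseteq> R \<Longrightarrow> homogeneous G S"
  unfolding homogeneous_def by blast

lemma homogeneous_App:
  assumes "homogeneous G R" "(n, m) \<in> R" "lab G n = App n1 n2"
  shows "\<exists>m1 m2. lab G m = App m1 m2"
proof -
  have "homogeneous_nodes G n m" using assms(1,2) unfolding homogeneous_def by blast
  with assms(3) show ?thesis by (cases "lab G m") (auto simp: homogeneous_nodes_def)
qed

lemma homogeneous_Abs:
  assumes "homogeneous G R" "(n, m) \<in> R" "lab G n = Abs n'"
  shows "\<exists>m'. lab G m = Abs m'"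
proof -
  have "homogeneous_nodes G n m" using assms(1,2) unfolding homogeneous_def by blast
  with assms(3) show ?thesis by (cases "lab G m") (auto simp: homogeneous_nodes_def)
qed

lemma homogeneous_propagated_path:
  assumes "homogeneous G R" "propagated G R" "R \<subseteq> nodes G \<times> nodes G"
    and "path G a \<tau> a'" "(a, b) \<in> R"
  shows "\<exists>b'. path G b \<tau> b' \<and> (a', b') \<in> R"
  using assms(4,5)
proof (induction arbitrary: b)
  case (path_nil n)
  then show ?case using assms(3) by (meson SigmaD2 path.path_nil subsetD)
next
  case (path_down n \<tau> m m')
  then obtain c where c: "path G b \<tau> c" "(m, c) \<in> R" by blast
  then obtain c' where "lab G c = Abs c'" using homogeneous_Abs[OF assms(1)] path_down.hyps(2) by blast
  with c path_down.hyps(2) assms(2) show ?case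
    unfolding propagated_def by (blast intro: path.path_down)
next
  case (path_sw n \<tau> m m1 m2)
  then obtain c where c: "path G b \<tau> c" "(m, c) \<in> R" by blast
  then obtain c1 c2 where "lab G c = App c1 c2" using homogeneous_App[OF assms(1)] path_sw.hyps(2) by blast
  with c path_sw.hyps(2) assms(2) show ?case
    unfolding propagated_def by (blast intro: path.path_sw)
next
  case (path_se n \<tau> m m1 m2)
  then obtain c where c: "path G b \<tau> c" "(m, c) \<in> R" by blast
  then obtain c1 c2 where "lab G c = App c1 c2" using homogeneous_App[OF assms(1)] path_se.hyps(2) by blast
  with c path_se.hyps(2) assms(2) show ?case
    unfolding propagated_def by (blast intro: path.path_se)
qed

definition traces :: "('n, 'a) graph \<Rightarrow> 'n \<Rightarrow> dir list set" where
  "traces G n = {\<tau>. \<exists>m. path G n \<tau> m}"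

lemma homogeneous_propagated_traces_eq:
  assumes "homogeneous G R" "propagated G R" "R \<subseteq> nodes G \<times> nodes G" "(a, b) \<in> R"
  shows "traces G a = traces G b"
proof -
  have "traces G a \<subseteq> traces G b" if "homogeneous G S" "propagated G S"
    "S \<subseteq> nodes G \<times> nodes G" "(a, b) \<in> S" for S a b
    using homogeneous_propagated_path[OF that(1-3) _ that(4)] by (auto simp: traces_def)
  from this[OF assms] this[OF homogeneous_converse propagated_converse, of R b a] assms
  show ?thesis by blast
qed

lemma propagation_subset:
  assumes "propagated G B" "Q \<subseteq> B"
  shows "propagation G Q \<subseteq> B"
proof (rule subrelI)
  fix a b assume "(a, b) \<in> propagation G Q"
  then show "(a, b) \<in> B"
  proof induction
    case (prop_base n m)
    with assms(2) show ?case by blast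
  qed (use assms(1) in \<open>unfold propagated_def, blast\<close>)+
qed

lemma propagated_propagation: "propagated G (propagation G Q)"
  unfolding propagated_def by (intro conjI allI impI) (fact prop_sw prop_se prop_down)+

lemma propagation_iff_common_trace:
  assumes "Q \<subseteq> nodes G \<times> nodes G"
  shows "(a, b) \<in> propagation G Q \<longleftrightarrow> (\<exists>r s \<tau>. (r, s) \<in> Q \<and> path G r \<tau> a \<and> path G s \<tau> b)"
proof
  assume "(a, b) \<in> propagation G Q"
  then show "\<exists>r s \<tau>. (r, s) \<in> Q \<and> path G r \<tau> a \<and> path G s \<tau> b"
  proof induction
    case (prop_base n m)
    then show ?case using assms by (meson SigmaD1 SigmaD2 path.path_nil subsetD)
  qed (meson path.intros)+
next
  assume "\<exists>r s \<tau>. (r, s) \<in> Q \<and> path G r \<tau> a \<and> path G s \<tau> b"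
  then obtain r s \<tau> where rs: "(r, s) \<in> Q" and "path G r \<tau> a" "path G s \<tau> b" by blast
  from \<open>path G r \<tau> a\<close> rs \<open>path G s \<tau> b\<close> show "(a, b) \<in> propagation G Q"
  proof (induction arbitrary: b rule: path.induct)
    case (path_nil n)
    then show ?case by (auto simp: path_Nil_iff intro: prop_base)
  next
    case (path_down n \<tau> m m')
    from path_down.prems(2) show ?case
      by (cases rule: path.cases) (use path_down in \<open>auto intro: prop_down\<close>)
  next
    case (path_sw n \<tau> m m1 m2)
    from path_sw.prems(2) show ?case
      by (cases rule: path.cases) (use path_sw in \<open>auto intro: prop_sw\<close>)
  next
    case (path_se n \<tau> m m1 m2)
    from path_se.prems(2) show ?case
      by (cases rule: path.cases) (use path_se in \<open>auto intro: prop_se\<close>)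
  qed
qed

lemma trancl_step_imp_path:
  assumes "(c, w) \<in> {(c, w). \<exists>d. path G w [d] c}\<^sup>+"
  shows "\<exists>\<tau>. \<tau> \<noteq> [] \<and> path G w \<tau> c"
  using assms
proof (induction rule: trancl_induct)
  case (step y z)
  then obtain \<tau> d where "path G y \<tau> c" "path G z [d] y" by blast
  then have "path G z (\<tau> @ [d]) c" by (rule path_append)
  then show ?case by blast
qed blast

lemma finite_lengths_traces:
  assumes "pre_lambda_graph G" "finite (nodes G)" and acyclic: "\<And>n \<tau>. path G n \<tau> n \<Longrightarrow> \<tau> = []"
  shows "finite (length ` traces G w)"
proof -
  define E where "E = {(c, w). \<exists>d. path G w [d] c}"
  have "E \<subseteq> nodes G \<times> nodes G"
    using path_source path_target[OF assms(1)] by (fastforce simp: E_def)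
  with assms(2) have "finite E" by (meson finite_SigmaI finite_subset)
  moreover have "acyclic E"
    unfolding acyclic_def
  proof
    fix x show "(x, x) \<notin> E\<^sup>+"
      using trancl_step_imp_path[where G = G and c = x and w = x] acyclic unfolding E_def by blast
  qed
  ultimately have "wf E" by (rule finite_acyclic_wf)
  then show ?thesis
  proof (induction w rule: wf_induct_rule)
    case (less w)
    define S where "S = (\<Union>w'\<in>E\<inverse> `` {w}. Suc ` length ` traces G w')"
    have "length ` traces G w \<subseteq> insert 0 S"
    proof
      fix k assume "k \<in> length ` traces G w"
      then obtain \<sigma> c where k: "k = length \<sigma>" "path G w \<sigma> c" unfolding traces_def by blast
      show "k \<in> insert 0 S"
      proof (cases \<sigma> rule: rev_exhaust)
        case Nil
        then show ?thesis using k by simp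
      next
        case (snoc \<rho> d)
        from assms(1) k(2)[unfolded snoc] obtain w' where "path G w [d] w'" "path G w' \<rho> c"
          by (rule path_appendE)
        then have "w' \<in> E\<inverse> `` {w}" "\<rho> \<in> traces G w'" unfolding E_def traces_def by blast+
        then have "Suc (length \<rho>) \<in> S" unfolding S_def by blast
        then show ?thesis using k snoc by simp
      qed
    qed
    moreover have "finite S"
      unfolding S_def using \<open>finite E\<close> less by simp
    ultimately show ?case by (meson finite_insert finite_subset)
  qed
qed

lemma traces_neq_if_path:
  assumes "lambda_graph G" "path G x \<rho> z" "\<rho> \<noteq> []"
  shows "traces G x \<noteq> traces G z"
proof
  assume eq: "traces G x = traces G z"
  have pl: "pre_lambda_graph G" using assms(1) by (simp add: lambda_graph_def)
  have fin: "finite (length ` traces G z)"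
    using assms(1) unfolding lambda_graph_def by (intro finite_lengths_traces) auto
  have "[] \<in> traces G z"
    using path_target[OF pl assms(2)] unfolding traces_def by (blast intro: path_nil)
  with fin have "Max (length ` traces G z) \<in> length ` traces G z" by (intro Max_in) auto
  then obtain \<sigma> where "\<sigma> \<in> traces G z" and max: "length \<sigma> = Max (length ` traces G z)"
    by (metis imageE)
  then obtain c where "path G z \<sigma> c" unfolding traces_def by blast
  from path_append[OF this assms(2)] have "\<sigma> @ \<rho> \<in> traces G z"
    using eq unfolding traces_def by blast
  then have "length (\<sigma> @ \<rho>) \<le> length \<sigma>" unfolding max using Max_ge[OF fin] by blast
  with assms(3) show False by simp
qed

lemma synchronised_paths_offset_Nil:
  assumes "lambda_graph G"
    and sync: "\<And>\<sigma> a b. path G r \<sigma> a \<Longrightarrow> path G s \<sigma> b \<Longrightarrow> traces G a = traces G b"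
    and "path G r \<tau> l" "path G s (\<rho> @ \<tau>) l'" "traces G l = traces G l'"
  shows "\<rho> = []"
proof -
  have "pre_lambda_graph G" using assms(1) by (simp add: lambda_graph_def)
  from this assms(4) obtain x where "path G s \<tau> x" "path G x \<rho> l'" by (rule path_appendE)
  moreover have "traces G x = traces G l'" using sync assms(3,5) calculation(1) by metis
  ultimately show ?thesis using traces_neq_if_path[OF assms(1)] by blast
qed

lemma propagation_binders:
  assumes G: "lambda_graph G" and "is_query G Q"
    and trace_eq: "\<And>a b. (a, b) \<in> propagation G Q \<Longrightarrow> traces G a = traces G b"
    and nm: "(n, m) \<in> propagation G Q" "lab G n = BVar l" "lab G m = BVar l'"
    and ll: "traces G l = traces G l'"
  shows "(l, l') \<in> propagation G Q"
proof -
  have pl: "pre_lambda_graph G"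
    and dom: "\<And>n l. n \<in> nodes G \<Longrightarrow> lab G n = BVar l \<Longrightarrow> dominates G l n"
    using G unfolding lambda_graph_def by blast+
  have roots: "\<And>r s. (r, s) \<in> Q \<Longrightarrow> is_root G r \<and> is_root G s"
    using \<open>is_query G Q\<close> unfolding is_query_def by blast
  then have Q: "Q \<subseteq> nodes G \<times> nodes G" unfolding is_root_def by auto
  note common = propagation_iff_common_trace[OF Q]
  obtain r s \<tau> where rs: "(r, s) \<in> Q" "path G r \<tau> n" "path G s \<tau> m"
    using nm(1) common by blast
  have sync: "\<And>\<sigma> a b. path G r \<sigma> a \<Longrightarrow> path G s \<sigma> b \<Longrightarrow> traces G a = traces G b"
    using rs(1) common trace_eq by blast
  have "crosses G r \<tau> l" "crosses G s \<tau> l'"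
    using dom[OF path_target[OF pl rs(2)] nm(2)] dom[OF path_target[OF pl rs(3)] nm(3)]
      roots[OF rs(1)] rs(2,3) unfolding dominates_def by blast+
  then obtain \<tau>1 \<tau>2 where \<tau>1: "suffix \<tau>1 \<tau>" "path G r \<tau>1 l" and \<tau>2: "suffix \<tau>2 \<tau>" "path G s \<tau>2 l'"
    by (meson crosses_imp_suffix_path)
  have sync': "\<And>\<sigma> a b. path G s \<sigma> a \<Longrightarrow> path G r \<sigma> b \<Longrightarrow> traces G a = traces G b"
    using sync by metis
  have "\<tau>1 = \<tau>2"
    using suffix_same_cases[OF \<tau>1(1) \<tau>2(1)]
  proof
    assume "suffix \<tau>1 \<tau>2"
    then obtain \<rho> where \<rho>: "\<tau>2 = \<rho> @ \<tau>1" by (rule suffixE)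
    have "\<rho> = []"
      using synchronised_paths_offset_Nil[OF G sync \<tau>1(2) \<tau>2(2)[unfolded \<rho>] ll] .
    with \<rho> show ?thesis by simp
  next
    assume "suffix \<tau>2 \<tau>1"
    then obtain \<rho> where \<rho>: "\<tau>1 = \<rho> @ \<tau>2" by (rule suffixE)
    have "\<rho> = []"
      using synchronised_paths_offset_Nil[OF G sync' \<tau>2(2) \<tau>1(2)[unfolded \<rho>] ll[symmetric]] .
    with \<rho> show ?thesis by simp
  qed
  with rs(1) \<tau>1(2) \<tau>2(2) common show ?thesis by blast
qed

theorem mainTheorem9:
  fixes G :: "('n, 'a) graph" and B Q :: "'n rel"
  assumes "lambda_graph G"
    and "B \<subseteq> nodes G \<times> nodes G"
    and "bisimulation G B"
    and "is_query G Q"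
    and "Q \<subseteq> B"
  shows "bisimulation G (propagation G Q)"
proof -
  have hom: "homogeneous G B" and propagated: "propagated G B"
    and binders: "\<And>n m l l'. (n, m) \<in> B \<Longrightarrow> lab G n = BVar l \<Longrightarrow> lab G m = BVar l' \<Longrightarrow> (l, l') \<in> B"
    using assms(3) unfolding bisimulation_def by blast+
  have sub: "propagation G Q \<subseteq> B" using propagation_subset[OF propagated assms(5)] .
  have trace_eq: "\<And>a b. (a, b) \<in> B \<Longrightarrow> traces G a = traces G b"
    using homogeneous_propagated_traces_eq[OF hom propagated assms(2)] .
  have "(l, l') \<in> propagation G Q"
    if "(n, m) \<in> propagation G Q" "lab G n = BVar l" "lab G m = BVar l'" for n m l l'
    using propagation_binders[OF assms(1,4) _ that] trace_eq binders sub that by blast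
  then show ?thesis
    using homogeneous_subset[OF hom sub] propagated_propagation unfolding bisimulation_def by blast
qed

end
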